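(* Let $\mathcal G$ be an $\mathrm{MD}_{n-2}(n)$-algebra with $n\geq6$. (1) If $\dim\mathcal G^1=1$, then $\mathcal G\cong\mathfrak h_{2m+1}\oplus\mathbb R$ with $2m=n-2$. (2) If $\dim\mathcal G^1=2$ and $\mathcal G^1$ is not contained in the centre of $\mathcal G$, then $\mathcal G\cong\operatorname{aff}(\mathbb C)\oplus\mathbb R^2$.
   Context: All Lie algebras are finite-dimensional over $\mathbb R$; $\mathcal G^1=[\mathcal G,\mathcal G]$. An $\mathrm{MD}_k(n)$-algebra is an $n$-dimensional real solvable Lie algebra all of whose non-trivial coadjoint orbits (orbits of the coadjoint action of its connected simply connected Lie group; $\dim\Omega_F=\operatorname{rank}(F([x_i,x_j]))$, non-trivial iff $F|_{\mathcal G^1}\ne0$) have dimension $k$. $\mathfrak h_{2m+1}$ is the Heisenberg algebra with basis $x_1,\dots,x_m,y_1,\dots,y_m,z$ and nonzero brackets $[x_i,y_i]=z$. $\operatorname{aff}(\mathbb C)$ has basis $x_1,x_2,y_1,y_2$ with nonzero brackets $[x_1,y_1]=y_1$, $[x_1,y_2]=y_2$, $[x_2,y_1]=-y_2$, $[x_2,y_2]=y_1$. Direct sums are Lie algebra direct sums, $\mathbb R^k$ abelian. *)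

theory Defs
  imports "HOL-Analysis.Analysis"
begin

text \<open>A finite-dimensional real Lie algebra is modelled as a euclidean space type
  (a finite-dimensional real vector space) with a bracket operation.\<close>

definition lie_algebra :: "('a::euclidean_space \<Rightarrow> 'a \<Rightarrow> 'a) \<Rightarrow> bool" where
  "lie_algebra br \<longleftrightarrow> bilinear br \<and> (\<forall>x. br x x = 0) \<and>
     (\<forall>x y z. br x (br y z) + br y (br z x) + br z (br x y) = 0)"

fun derived_series :: "('a::euclidean_space \<Rightarrow> 'a \<Rightarrow> 'a) \<Rightarrow> nat \<Rightarrow> 'a set" where
  "derived_series br 0 = UNIV"
| "derived_series br (Suc k) =
     span {br x y | x y. x \<in> derived_series br k \<and> y \<in> derived_series br k}"

definition derived_alg :: "('a::euclidean_space \<Rightarrow> 'a \<Rightarrow> 'a) \<Rightarrow> 'a set" where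
  "derived_alg br = derived_series br 1"

definition solvable_lie :: "('a::euclidean_space \<Rightarrow> 'a \<Rightarrow> 'a) \<Rightarrow> bool" where
  "solvable_lie br \<longleftrightarrow> lie_algebra br \<and> (\<exists>k. derived_series br k = {0})"

definition lie_centre :: "('a::euclidean_space \<Rightarrow> 'a \<Rightarrow> 'a) \<Rightarrow> 'a set" where
  "lie_centre br = {z. \<forall>x. br z x = 0}"

text \<open>Dimension of the coadjoint orbit of F: the rank of the matrix (F([x_i,x_j]))
  with respect to the basis Basis, computed as the dimension of its row space.\<close>
definition orbit_dim :: "('a::euclidean_space \<Rightarrow> 'a \<Rightarrow> 'a) \<Rightarrow> ('a \<Rightarrow> real) \<Rightarrow> nat" where
  "orbit_dim br F = dim ((\<lambda>i. \<Sum>j\<in>Basis. F (br i j) *\<^sub>R j) ` Basis)"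

text \<open>MD_k(n)-algebra: n-dimensional real solvable Lie algebra all of whose non-trivial
  coadjoint orbits (F restricted to G^1 nonzero) have dimension k.\<close>
definition MD_algebra :: "('a::euclidean_space \<Rightarrow> 'a \<Rightarrow> 'a) \<Rightarrow> nat \<Rightarrow> nat \<Rightarrow> bool" where
  "MD_algebra br k n \<longleftrightarrow> DIM('a) = n \<and> solvable_lie br \<and>
     (\<forall>F. linear F \<and> (\<exists>x\<in>derived_alg br. F x \<noteq> 0) \<longrightarrow> orbit_dim br F = k)"

text \<open>Isomorphism with the d-dimensional Lie algebra given by structure constants c
  (basis e_0..e_{d-1}, [e_i,e_j] = sum_k c i j k e_k): a linear isomorphism sends e_i to b i,
  i.e. b is a basis of G satisfying the same bracket relations.\<close>
definition iso_to_sc :: "('a::euclidean_space \<Rightarrow> 'a \<Rightarrow> 'a) \<Rightarrow> nat \<Rightarrow> (nat \<Rightarrow> nat \<Rightarrow> nat \<Rightarrow> real) \<Rightarrow> bool" where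
  "iso_to_sc br d c \<longleftrightarrow> (\<exists>b::nat \<Rightarrow> 'a. inj_on b {..<d} \<and> independent (b ` {..<d}) \<and>
      span (b ` {..<d}) = UNIV \<and>
      (\<forall>i<d. \<forall>j<d. br (b i) (b j) = (\<Sum>k<d. c i j k *\<^sub>R b k)))"

text \<open>Structure constants of h_{2m+1} + R (dimension 2m+2):
  x_i = e_i (i<m), y_i = e_{m+i}, z = e_{2m}, the R-summand = e_{2m+1};
  nonzero brackets [x_i,y_i] = z (and [y_i,x_i] = -z).\<close>
definition heis_R_sc :: "nat \<Rightarrow> nat \<Rightarrow> nat \<Rightarrow> nat \<Rightarrow> real" where
  "heis_R_sc m i j k =
     (if k = 2*m \<and> i < m \<and> j = i + m then 1
      else if k = 2*m \<and> j < m \<and> i = j + m then -1 else 0)"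

text \<open>Structure constants of aff(C) + R^2 (dimension 6):
  x1 = e_0, x2 = e_1, y1 = e_2, y2 = e_3, e_4, e_5 central;
  [x1,y1]=y1, [x1,y2]=y2, [x2,y1]=-y2, [x2,y2]=y1, plus antisymmetry.\<close>
definition affC_R2_sc :: "nat \<Rightarrow> nat \<Rightarrow> nat \<Rightarrow> real" where
  "affC_R2_sc i j k =
     (if (i,j,k) = (0,2,2) then 1 else if (i,j,k) = (2,0,2) then -1
      else if (i,j,k) = (0,3,3) then 1 else if (i,j,k) = (3,0,3) then -1
      else if (i,j,k) = (1,2,3) then -1 else if (i,j,k) = (2,1,3) then 1
      else if (i,j,k) = (1,3,2) then 1 else if (i,j,k) = (3,1,2) then -1
      else 0)"

end

theory Submission
  imports Defs
begin

text \<open>Let \<open>F\<close> be a functional not vanishing on \<open>G\<^sup>1\<close>. Since all non-trivial orbits have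
  dimension \<open>n - 2\<close>, the radical of the skew form \<open>F([x,y])\<close> (the stabilizer of \<open>F\<close>) is
  two-dimensional, so it contains no common kernel of two functionals, which has dimension at
  least \<open>n - 2 \<ge> 4\<close>. Hence \<open>F([\<cdot>,\<cdot>])\<close> is never of the form \<open>p \<and> q\<close>, and if each \<open>ad x\<close> acts
  on \<open>G\<^sup>1\<close> through \<open>F\<close> by a scalar \<open>\<nu>(x)\<close>, the Jacobi identity gives \<open>\<nu> \<and> F([\<cdot>,\<cdot>]) = 0\<close>,
  which forces \<open>\<nu> = 0\<close>.

  If \<open>G\<^sup>1 = \<real>z\<close> this makes \<open>z\<close> central, so \<open>[x,y] = F([x,y]) z\<close>, and a symplectic basis of
  \<open>F([\<cdot>,\<cdot>])\<close> completed by a basis \<open>z, u\<close> of its radical is a Heisenberg basis.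

  If \<open>G\<^sup>1\<close> is two-dimensional and not central, the same argument rules out \<open>ad\<close>-invariant lines
  in \<open>G\<^sup>1\<close>. Then \<open>G\<^sup>1\<close> is abelian and some \<open>ad x\<^sub>0\<close> has no real eigenvector on it, so \<open>G\<close>
  acts on \<open>G\<^sup>1\<close> as \<open>\<complex>\<close> acts on \<open>\<complex>\<close>; this produces the basis \<open>x\<^sub>1, x\<^sub>2, y\<^sub>1, y\<^sub>2\<close> of
  \<open>aff(\<complex>)\<close>. Everything else can be corrected into the centralizer of \<open>x\<^sub>1, x\<^sub>2, G\<^sup>1\<close>, which
  is the centre; the centre lies in the two-dimensional stabilizer of a functional, which gives
  the summand \<open>\<real>\<^sup>2\<close> and \<open>n = 6\<close>.\<close>

section \<open>Linear algebra\<close>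

lemma dim_range_plus_dim_kernel:
  fixes f :: "'a::euclidean_space \<Rightarrow> 'b::euclidean_space"
  assumes lf: "linear f"
  shows "dim (range f) + dim {x. f x = 0} = DIM('a)"
proof -
  let ?K = "{x. f x = 0}"
  let ?P = "{y. \<forall>x\<in>?K. orthogonal x y}"
  have sK: "subspace ?K" using lf by (simp add: linear_subspace_kernel)
  have dim_P: "dim ?P + dim ?K = DIM('a)"
    using dim_subspace_orthogonal_to_vectors[OF sK subspace_UNIV] by simp
  have sP: "subspace ?P" unfolding subspace_def orthogonal_def by (simp add: inner_add_right)
  have img: "f ` ?P = range f"
  proof
    show "range f \<subseteq> f ` ?P"
    proof
      fix v assume "v \<in> range f"
      then obtain x where x: "v = f x" by auto
      obtain y z where yz: "y \<in> span ?K" "\<And>w. w \<in> span ?K \<Longrightarrow> orthogonal z w" "x = y + z"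
        using orthogonal_subspace_decomp_exists[of ?K x] by blast
      have "y \<in> ?K" using yz(1) span_eq_iff[THEN iffD2, OF sK] by simp
      have "z \<in> ?P"
        using yz(2) span_base[of _ ?K] by (auto simp: orthogonal_commute)
      moreover have "f x = f z" using \<open>y \<in> ?K\<close> yz(3) linear_add[OF lf] by simp
      ultimately show "v \<in> f ` ?P" using x by blast
    qed
  qed auto
  have "inj_on f (span ?P)"
  proof (rule inj_onI)
    fix p q assume "p \<in> span ?P" "q \<in> span ?P" "f p = f q"
    then have "p - q \<in> span ?P" "p - q \<in> ?K" by (simp_all add: span_diff linear_diff[OF lf])
    moreover have "span ?P = ?P" by (rule span_eq_iff[THEN iffD2, OF sP])
    ultimately have "p - q \<in> ?P" "p - q \<in> ?K" by (simp_all only:)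
    then have "orthogonal (p - q) (p - q)" by blast
    then show "p = q" by (simp add: orthogonal_def)
  qed
  then have "dim (f ` ?P) = dim ?P" using dim_image_eq[OF lf] by blast
  then show ?thesis using dim_P img by simp
qed

lemma DIM_le_dim_common_kernel_plus_2:
  fixes p q :: "'a::euclidean_space \<Rightarrow> real"
  assumes "linear p" "linear q"
  shows "DIM('a) \<le> dim {y. p y = 0 \<and> q y = 0} + 2"
proof -
  let ?f = "\<lambda>y. (p y, q y)"
  have lf: "linear ?f" using assms
    by (intro linearI) (simp_all add: linear_add linear_cmul)
  have "dim (range ?f) \<le> DIM(real \<times> real)" by (rule dim_subset_UNIV)
  moreover have "{y. ?f y = 0} = {y. p y = 0 \<and> q y = 0}" by (auto simp: zero_prod_def)
  ultimately show ?thesis using dim_range_plus_dim_kernel[OF lf] by simp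
qed

lemma linear_functional_separating:
  fixes a b :: "'a::euclidean_space"
  assumes "a \<noteq> 0" "b \<notin> span {a}"
  shows "\<exists>f. linear f \<and> f a = 0 \<and> f b = (1::real)"
proof -
  define w where "w = b - ((b \<bullet> a) / (a \<bullet> a)) *\<^sub>R a"
  have aa: "a \<bullet> a \<noteq> 0" using assms(1) by simp
  have "w \<noteq> 0"
  proof
    assume "w = 0"
    then have "b = ((b \<bullet> a) / (a \<bullet> a)) *\<^sub>R a" by (simp add: w_def)
    then have "b \<in> span {a}" by (metis span_base span_mul insertI1)
    then show False using assms(2) by simp
  qed
  have aw: "a \<bullet> w = 0" using aa by (simp add: w_def inner_diff_right inner_commute)
  have bw: "b \<bullet> w = w \<bullet> w"
    by (simp add: w_def inner_diff_left inner_diff_right aw[unfolded w_def inner_diff_right] inner_commute)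
  define f where "f v = (v \<bullet> w) / (w \<bullet> w)" for v
  have "linear f" unfolding f_def by (intro linearI) (simp_all add: inner_add_left add_divide_distrib)
  moreover have "f a = 0" by (simp add: f_def aw)
  moreover have "f b = 1" using \<open>w \<noteq> 0\<close> by (simp add: f_def bw)
  ultimately show ?thesis by blast
qed

lemma not_in_span_singleton_swap:
  fixes a b :: "'a::real_vector"
  assumes a0: "a \<noteq> 0" and b: "b \<notin> span {a}"
  shows "b \<noteq> 0 \<and> a \<notin> span {b}"
proof
  show "b \<noteq> 0" using b span_zero by auto
  show "a \<notin> span {b}"
  proof
    assume "a \<in> span {b}"
    then obtain t where t: "a = t *\<^sub>R b" by (auto simp: span_singleton)
    then have "b = (1 / t) *\<^sub>R a" using a0 by auto
    then show False using b span_scale[OF span_base, of a "{a}"] by simp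
  qed
qed

lemma scaleR_pair_eq_0_imp:
  fixes z u :: "'a::real_vector"
  assumes "z \<noteq> 0" "u \<notin> span {z}" "a *\<^sub>R z + b *\<^sub>R u = 0"
  shows "a = 0 \<and> b = 0"
proof (cases "b = 0")
  case False
  have "b *\<^sub>R u = - (a *\<^sub>R z)" using assms(3) by (simp add: eq_neg_iff_add_eq_0 add.commute)
  then have "(1 / b) *\<^sub>R (b *\<^sub>R u) = (- a / b) *\<^sub>R z" by simp
  then have "u = (- a / b) *\<^sub>R z" using False by simp
  moreover have "(- a / b) *\<^sub>R z \<in> span {z}" by (rule span_scale) (simp add: span_base)
  ultimately show ?thesis using assms(2) by simp
qed (use assms in auto)

lemma span_pair_dual_basis:
  fixes a b :: "'a::euclidean_space"
  assumes a: "a \<noteq> 0" and b: "b \<notin> span {a}"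
  obtains fa fb :: "'a \<Rightarrow> real"
  where "linear fa" "linear fb" "fa a = 1" "fa b = 0" "fb a = 0" "fb b = 1"
    "\<And>v. v \<in> span {a, b} \<Longrightarrow> v = fa v *\<^sub>R a + fb v *\<^sub>R b"
proof -
  obtain fb :: "'a \<Rightarrow> real" where fb: "linear fb" "fb a = 0" "fb b = 1"
    using linear_functional_separating[OF a b] by blast
  obtain fa :: "'a \<Rightarrow> real" where fa: "linear fa" "fa b = 0" "fa a = 1"
    using linear_functional_separating[of b a] not_in_span_singleton_swap[OF a b] by blast
  have "v = fa v *\<^sub>R a + fb v *\<^sub>R b" if v: "v \<in> span {a, b}" for v
  proof -
    obtain k t where "v - k *\<^sub>R a = t *\<^sub>R b"
      using v span_insert[of a "{b}"] span_singleton[of b] by blast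
    then have "v = k *\<^sub>R a + t *\<^sub>R b" by (simp add: algebra_simps)
    then show ?thesis using fa fb by (simp add: linear_add linear_cmul)
  qed
  with fa fb show thesis using that by blast
qed

lemma sum_lessThan_double:
  "(\<Sum>i<k+k::nat. f i) = (\<Sum>i<k. f i) + (\<Sum>i<k. f (k+i)::'a::comm_monoid_add)"
proof -
  have "(\<Sum>i<k+k. f i) = (\<Sum>i\<in>{0..<k}. f i) + (\<Sum>i\<in>{k..<k+k}. f i)"
    by (simp add: atLeast0LessThan[symmetric] sum.atLeastLessThan_concat)
  also have "(\<Sum>i\<in>{k..<k+k}. f i) = (\<Sum>i\<in>{0..<k}. f (k+i))"
    using sum.shift_bounds_nat_ivl[of f 0 k k] by (simp add: add.commute)
  finally show ?thesis by (simp add: atLeast0LessThan)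
qed

lemma inj_on_independent_if_coefficients_zero:
  fixes b :: "nat \<Rightarrow> 'a::euclidean_space"
  assumes coeff: "\<And>c. (\<Sum>i<d. c i *\<^sub>R b i) = 0 \<Longrightarrow> \<forall>i<d. c i = 0"
  shows "inj_on b {..<d} \<and> independent (b ` {..<d})"
proof
  show inj: "inj_on b {..<d}"
  proof (rule inj_onI, rule ccontr)
    fix i j assume i: "i \<in> {..<d}" and j: "j \<in> {..<d}" and e: "b i = b j" and ne: "i \<noteq> j"
    define c where "c l = (if l = i then 1 else if l = j then -1 else (0::real))" for l
    have "(\<Sum>l<d. c l *\<^sub>R b l) = (\<Sum>l<d. (if l = i then b i else 0) + (if l = j then - b j else 0))"
      by (rule sum.cong) (auto simp: c_def ne)
    also have "\<dots> = 0" using i j e by (simp add: sum.distrib)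
    finally have "c i = 0" using coeff i by blast
    then show False by (simp add: c_def)
  qed
  show "independent (b ` {..<d})"
  proof (rule independent_if_scalars_zero)
    fix f v assume s: "(\<Sum>x\<in>b ` {..<d}. f x *\<^sub>R x) = 0" and v: "v \<in> b ` {..<d}"
    have "(\<Sum>i<d. f (b i) *\<^sub>R b i) = 0"
      using s sum.reindex[OF inj, of "\<lambda>x. f x *\<^sub>R x"] by simp
    then have "\<forall>i<d. f (b i) = 0" by (rule coeff)
    then show "f v = 0" using v by auto
  qed simp
qed

lemma inj_on_independent_if_spanning:
  fixes b :: "nat \<Rightarrow> 'a::euclidean_space"
  assumes sp: "UNIV \<subseteq> span (b ` {..<d})" and d: "d = DIM('a)"
  shows "inj_on b {..<d} \<and> independent (b ` {..<d})"
proof -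
  have "dim (UNIV::'a set) \<le> card (b ` {..<d})"
    by (rule span_card_ge_dim[OF _ sp]) simp_all
  moreover have "card (b ` {..<d}) \<le> d" using card_image_le[of "{..<d}" b] by simp
  ultimately have c: "card (b ` {..<d}) = d" using d by simp
  have "inj_on b {..<d}" by (rule eq_card_imp_inj_on) (simp_all add: c)
  moreover have "independent (b ` {..<d})"
    by (rule card_le_dim_spanning[OF _ sp]) (simp_all add: c d[symmetric])
  ultimately show ?thesis by blast
qed

section \<open>Alternating forms and symplectic bases\<close>

locale alternating_form =
  fixes \<omega> :: "'a::euclidean_space \<Rightarrow> 'a \<Rightarrow> real"
  assumes bilinear: "bilinear \<omega>" and alternating [simp]: "\<omega> x x = 0"
begin

lemma linear_left: "linear (\<lambda>x. \<omega> x y)" and linear_right: "linear (\<omega> x)"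
  using bilinear by (simp_all add: bilinear_def)

lemma add_left [simp]: "\<omega> (x + y) z = \<omega> x z + \<omega> y z"
  and add_right [simp]: "\<omega> z (x + y) = \<omega> z x + \<omega> z y"
  and diff_left [simp]: "\<omega> (x - y) z = \<omega> x z - \<omega> y z"
  and diff_right [simp]: "\<omega> z (x - y) = \<omega> z x - \<omega> z y"
  and scale_left [simp]: "\<omega> (c *\<^sub>R x) y = c * \<omega> x y"
  and scale_right [simp]: "\<omega> x (c *\<^sub>R y) = c * \<omega> x y"
  and zero_left [simp]: "\<omega> 0 x = 0"
  and zero_right [simp]: "\<omega> x 0 = 0"
  using bilinear_ladd[OF bilinear] bilinear_radd[OF bilinear] bilinear_lsub[OF bilinear]
    bilinear_rsub[OF bilinear] bilinear_lmul[OF bilinear] bilinear_rmul[OF bilinear]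
    bilinear_lzero[OF bilinear] bilinear_rzero[OF bilinear]
  by simp_all

lemma antisym: "\<omega> x y = - \<omega> y x"
proof -
  have "0 = \<omega> (x + y) (x + y)" by simp
  also have "\<dots> = \<omega> x x + \<omega> x y + (\<omega> y x + \<omega> y y)" by (simp only: add_left add_right)
  finally show ?thesis by simp
qed

definition radical :: "'a set \<Rightarrow> 'a set" where
  "radical V = {v \<in> V. \<forall>w\<in>V. \<omega> v w = 0}"

definition symplectic_family :: "nat \<Rightarrow> (nat \<Rightarrow> 'a) \<Rightarrow> (nat \<Rightarrow> 'a) \<Rightarrow> bool" where
  "symplectic_family k x y \<longleftrightarrow> (\<forall>i<k. \<forall>j<k.
     \<omega> (x i) (y j) = (if i = j then 1 else 0) \<and> \<omega> (x i) (x j) = 0 \<and> \<omega> (y i) (y j) = 0)"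

lemma radical_UNIV_iff: "v \<in> radical UNIV \<longleftrightarrow> (\<forall>w. \<omega> v w = 0)"
  by (simp add: radical_def)

lemma radical_UNIV_right: "v \<in> radical UNIV \<Longrightarrow> \<omega> w v = 0"
  using antisym[of w v] by (simp add: radical_def)

lemma subspace_radical_UNIV: "subspace (radical UNIV)"
  by (simp add: subspace_def radical_def)

lemma symplectic_complement_decomp:
  assumes "subspace V" "x0 \<in> V" "y0 \<in> V" "\<omega> x0 y0 = 1" "w \<in> V"
  shows "w - \<omega> x0 w *\<^sub>R y0 + \<omega> y0 w *\<^sub>R x0 \<in> {v \<in> V. \<omega> x0 v = 0 \<and> \<omega> y0 v = 0}"
  using assms antisym[of y0 x0] by (simp add: subspace_add subspace_diff subspace_scale)

lemma radical_symplectic_complement: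
  assumes V: "subspace V" "x0 \<in> V" "y0 \<in> V" "\<omega> x0 y0 = 1"
  shows "radical {v \<in> V. \<omega> x0 v = 0 \<and> \<omega> y0 v = 0} \<subseteq> radical V"
proof
  fix d assume "d \<in> radical {v \<in> V. \<omega> x0 v = 0 \<and> \<omega> y0 v = 0}"
  then have d: "d \<in> V" "\<omega> d x0 = 0" "\<omega> d y0 = 0"
    and rad: "\<And>w. w \<in> V \<Longrightarrow> \<omega> x0 w = 0 \<Longrightarrow> \<omega> y0 w = 0 \<Longrightarrow> \<omega> d w = 0"
    using antisym[of d x0] antisym[of d y0] by (auto simp: radical_def)
  have "\<omega> d w = 0" if w: "w \<in> V" for w
  proof -
    let ?p = "w - \<omega> x0 w *\<^sub>R y0 + \<omega> y0 w *\<^sub>R x0"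
    have "?p \<in> V" "\<omega> x0 ?p = 0" "\<omega> y0 ?p = 0"
      using symplectic_complement_decomp[OF V w] by blast+
    then have "\<omega> d ?p = 0" by (rule rad)
    then show ?thesis using d by simp
  qed
  then show "d \<in> radical V" using d by (simp add: radical_def)
qed

lemma symplectic_family_extend:
  assumes "symplectic_family k x y" "\<omega> x0 y0 = 1"
    and "\<forall>i<k. \<omega> x0 (x i) = 0 \<and> \<omega> x0 (y i) = 0 \<and> \<omega> y0 (x i) = 0 \<and> \<omega> y0 (y i) = 0"
  shows "symplectic_family (Suc k) (x(k := x0)) (y(k := y0))"
  using assms antisym[of "x _" x0] antisym[of "x _" y0] antisym[of "y _" y0]
  unfolding symplectic_family_def by (auto simp: less_Suc_eq)

lemma symplectic_complement_smaller:
  assumes V: "subspace V" "x0 \<in> V" "y0 \<in> V" "\<omega> x0 y0 = 1"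
  shows "subspace {v \<in> V. \<omega> x0 v = 0 \<and> \<omega> y0 v = 0}"
    and "dim {v \<in> V. \<omega> x0 v = 0 \<and> \<omega> y0 v = 0} < dim V"
proof -
  let ?V' = "{v \<in> V. \<omega> x0 v = 0 \<and> \<omega> y0 v = 0}"
  show sV': "subspace ?V'"
    unfolding subspace_def using subspace_0[OF V(1)] subspace_add[OF V(1)] subspace_scale[OF V(1)]
    by simp
  have "x0 \<notin> ?V'" using antisym[of y0 x0] V(4) by simp
  then have "?V' \<subset> V" using V(2) by auto
  moreover have "span V = V" "span ?V' = ?V'" using V(1) sV' by simp_all
  ultimately have "span ?V' \<subset> span V" by (simp only:)
  then show "dim ?V' < dim V" by (rule dim_psubset)
qed

lemma span_symplectic_complement_extend:
  assumes V: "subspace V" "x0 \<in> V" "y0 \<in> V" "\<omega> x0 y0 = 1"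
    and spn: "{v \<in> V. \<omega> x0 v = 0 \<and> \<omega> y0 v = 0}
      \<subseteq> span (S \<union> radical {v \<in> V. \<omega> x0 v = 0 \<and> \<omega> y0 v = 0})"
  shows "V \<subseteq> span (insert x0 (insert y0 S) \<union> radical V)"
proof
  fix w assume w: "w \<in> V"
  let ?T = "insert x0 (insert y0 S) \<union> radical V"
  have "span (S \<union> radical {v \<in> V. \<omega> x0 v = 0 \<and> \<omega> y0 v = 0}) \<subseteq> span ?T"
    by (rule span_mono) (use radical_symplectic_complement[OF V] in blast)
  then have p: "w - \<omega> x0 w *\<^sub>R y0 + \<omega> y0 w *\<^sub>R x0 \<in> span ?T"
    using spn symplectic_complement_decomp[OF V w] by blast
  have x0y0: "x0 \<in> span ?T" "y0 \<in> span ?T" by (auto intro: span_base)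
  have "(w - \<omega> x0 w *\<^sub>R y0 + \<omega> y0 w *\<^sub>R x0) + \<omega> x0 w *\<^sub>R y0 - \<omega> y0 w *\<^sub>R x0 \<in> span ?T"
    by (rule span_diff[OF span_add[OF p span_scale[OF x0y0(2)]] span_scale[OF x0y0(1)]])
  then show "w \<in> span ?T" by simp
qed

theorem symplectic_basis_exists:
  assumes "subspace V"
  obtains k x y where "\<forall>i<k. x i \<in> V \<and> y i \<in> V" "symplectic_family k x y"
    "V \<subseteq> span (x ` {..<k} \<union> y ` {..<k} \<union> radical V)"
proof -
  have "\<exists>k x y. (\<forall>i<k. x i \<in> V \<and> y i \<in> V) \<and> symplectic_family k x y \<and>
          V \<subseteq> span (x ` {..<k} \<union> y ` {..<k} \<union> radical V)"
    using assms
  proof (induction "dim V" arbitrary: V rule: less_induct)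
    case less
    show ?case
    proof (cases "\<forall>v\<in>V. \<forall>w\<in>V. \<omega> v w = 0")
      case True
      then have "V \<subseteq> span (radical V)" by (auto simp: radical_def intro: span_base)
      then show ?thesis
        by (intro exI[of _ "0::nat"]) (simp add: symplectic_family_def)
    next
      case False
      then obtain x0 y1 where x0: "x0 \<in> V" and y1: "y1 \<in> V" and ne: "\<omega> x0 y1 \<noteq> 0" by blast
      define y0 where "y0 = (1 / \<omega> x0 y1) *\<^sub>R y1"
      have y0: "y0 \<in> V" using y1 less.prems by (simp add: y0_def subspace_scale)
      have xy: "\<omega> x0 y0 = 1" using ne by (simp add: y0_def)
      define V' where "V' = {v \<in> V. \<omega> x0 v = 0 \<and> \<omega> y0 v = 0}"
      have sV': "subspace V'" and smaller: "dim V' < dim V"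
        unfolding V'_def by (rule symplectic_complement_smaller[OF less.prems x0 y0 xy])+
      from less.hyps[OF smaller sV'] obtain k x y where
        mem: "\<forall>i<k. x i \<in> V' \<and> y i \<in> V'" and fam: "symplectic_family k x y" and
        spn: "V' \<subseteq> span (x ` {..<k} \<union> y ` {..<k} \<union> radical V')"
        by blast
      have "V \<subseteq> span (insert x0 (insert y0 (x ` {..<k} \<union> y ` {..<k})) \<union> radical V)"
        by (rule span_symplectic_complement_extend[OF less.prems x0 y0 xy spn[unfolded V'_def]])
      also have "insert x0 (insert y0 (x ` {..<k} \<union> y ` {..<k}))
          = x(k := x0) ` {..<Suc k} \<union> y(k := y0) ` {..<Suc k}"
        by (auto simp: lessThan_Suc)
      finally have "V \<subseteq> span (x(k := x0) ` {..<Suc k} \<union> y(k := y0) ` {..<Suc k} \<union> radical V)" .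
      moreover have "symplectic_family (Suc k) (x(k := x0)) (y(k := y0))"
        using symplectic_family_extend[OF fam xy] mem by (simp add: V'_def)
      moreover have "\<forall>i<Suc k. (x(k := x0)) i \<in> V \<and> (y(k := y0)) i \<in> V"
        using mem x0 y0 by (auto simp: V'_def less_Suc_eq)
      ultimately show ?thesis by blast
    qed
  qed
  then show thesis using that by blast
qed

lemma symplectic_family_pairing:
  fixes c d :: "nat \<Rightarrow> real"
  assumes fam: "symplectic_family k x y" and j: "j < k" and r: "r \<in> radical UNIV"
  defines "s \<equiv> (\<Sum>i<k. c i *\<^sub>R x i) + (\<Sum>i<k. d i *\<^sub>R y i) + r"
  shows "\<omega> s (y j) = c j" and "\<omega> (x j) s = d j"
proof -
  have "\<omega> s (y j) = (\<Sum>i<k. c i * \<omega> (x i) (y j)) + (\<Sum>i<k. d i * \<omega> (y i) (y j))"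
    using r by (simp add: s_def radical_def linear_sum[OF linear_left] linear_add[OF linear_left])
  also have "\<dots> = c j"
    using fam j by (simp add: symplectic_family_def if_distrib[of "(*) _"] cong: if_cong)
  finally show "\<omega> s (y j) = c j" .
  have "\<omega> (x j) s = (\<Sum>i<k. c i * \<omega> (x j) (x i)) + (\<Sum>i<k. d i * \<omega> (x j) (y i))"
    using radical_UNIV_right[OF r]
    by (simp add: s_def linear_sum[OF linear_right] linear_add[OF linear_right])
  also have "\<dots> = d j"
    using fam j by (simp add: symplectic_family_def if_distrib[of "(*) _"] cong: if_cong)
  finally show "\<omega> (x j) s = d j" .
qed

end

definition heis_family :: "nat \<Rightarrow> (nat \<Rightarrow> 'a) \<Rightarrow> (nat \<Rightarrow> 'a) \<Rightarrow> 'a \<Rightarrow> 'a \<Rightarrow> nat \<Rightarrow> 'a" where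
  "heis_family k x y z u i =
     (if i < k then x i else if i < 2 * k then y (i - k) else if i = 2 * k then z else u)"

lemma heis_family_simps:
  "i < k \<Longrightarrow> heis_family k x y z u i = x i"
  "i < k \<Longrightarrow> heis_family k x y z u (k + i) = y i"
  "heis_family k x y z u (2 * k) = z"
  "heis_family k x y z u (2 * k + 1) = u"
  by (simp_all add: heis_family_def)

lemma heis_family_spans:
  assumes "UNIV \<subseteq> span (x ` {..<k} \<union> y ` {..<k} \<union> R)" "R \<subseteq> span {z, u}"
  shows "span (heis_family k x y z u ` {..<2 * k + 2}) = UNIV"
proof -
  let ?B = "heis_family k x y z u ` {..<2 * k + 2}"
  have "x ` {..<k} \<union> y ` {..<k} \<union> {z, u} \<subseteq> ?B"
  proof safe
    fix i assume i: "i < k"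
    show "x i \<in> ?B" by (rule image_eqI[where x = i]) (use i in \<open>simp_all add: heis_family_simps\<close>)
    show "y i \<in> ?B" by (rule image_eqI[where x = "k + i"]) (use i in \<open>simp_all add: heis_family_simps\<close>)
  next
    show "z \<in> ?B" by (rule image_eqI[where x = "2 * k"]) (simp_all add: heis_family_simps)
    show "u \<in> ?B" by (rule image_eqI[where x = "2 * k + 1"]) (simp_all add: heis_family_def)
  qed
  then have "x ` {..<k} \<union> y ` {..<k} \<union> R \<subseteq> span ?B"
    using assms(2) span_superset[of ?B] span_mono[of "{z, u}" ?B] by blast
  then have "span (x ` {..<k} \<union> y ` {..<k} \<union> R) \<subseteq> span ?B"
    by (rule span_minimal) simp
  then show ?thesis using assms(1) by auto
qed

context alternating_form
begin

lemma heis_family_independent: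
  assumes fam: "symplectic_family k x y" and rad: "z \<in> radical UNIV" "u \<in> radical UNIV"
    and z0: "z \<noteq> 0" and u: "u \<notin> span {z}"
  shows "inj_on (heis_family k x y z u) {..<2 * k + 2} \<and>
    independent (heis_family k x y z u ` {..<2 * k + 2})"
proof (rule inj_on_independent_if_coefficients_zero)
  fix c assume sum0: "(\<Sum>i<2 * k + 2. c i *\<^sub>R heis_family k x y z u i) = 0"
  let ?r = "c (2 * k) *\<^sub>R z + c (2 * k + 1) *\<^sub>R u"
  have r: "?r \<in> radical UNIV"
    using rad subspace_radical_UNIV by (simp add: subspace_add subspace_scale)
  have "(\<Sum>i<2 * k + 2. c i *\<^sub>R heis_family k x y z u i)
      = (\<Sum>i<k + k. c i *\<^sub>R heis_family k x y z u i) + ?r"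
    using heis_family_simps(3) by (simp add: mult_2 heis_family_def)
  also have "\<dots> = (\<Sum>i<k. c i *\<^sub>R x i) + (\<Sum>i<k. c (k + i) *\<^sub>R y i) + ?r"
    by (simp add: sum_lessThan_double heis_family_simps)
  finally have s: "(\<Sum>i<k. c i *\<^sub>R x i) + (\<Sum>i<k. c (k + i) *\<^sub>R y i) + ?r = 0"
    using sum0 by simp
  have cx: "c j = 0" and cy: "c (k + j) = 0" if "j < k" for j
    using symplectic_family_pairing[OF fam that r, of c "\<lambda>i. c (k + i)"]
    by (simp_all only: s zero_left zero_right)
  then have "?r = 0" using s by simp
  then have cz: "c (2 * k) = 0 \<and> c (2 * k + 1) = 0" by (rule scaleR_pair_eq_0_imp[OF z0 u])
  show "\<forall>i<2 * k + 2. c i = 0"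
  proof (intro allI impI)
    fix i assume "i < 2 * k + 2"
    then consider "i < k" | "k \<le> i" "i < 2 * k" | "i = 2 * k" | "i = 2 * k + 1" by linarith
    then show "c i = 0"
      by cases (use cx cy[of "i - k"] cz in auto)
  qed
qed

lemma heis_family_form:
  assumes fam: "symplectic_family k x y" and rad: "z \<in> radical UNIV" "u \<in> radical UNIV"
    and i: "i < 2 * k + 2" and j: "j < 2 * k + 2"
  shows "\<omega> (heis_family k x y z u i) (heis_family k x y z u j) = heis_R_sc k i j (2 * k)"
proof -
  have rad': "\<omega> v w = 0" "\<omega> w v = 0" if "v \<in> {z, u}" for v w
    using that rad radical_UNIV_right[of z w] radical_UNIV_right[of u w]
    by (auto simp: radical_UNIV_iff)
  show ?thesis
    using fam i j rad' antisym[of "y (i - k)" "x j"] unfolding symplectic_family_def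
    by (auto simp: heis_family_def heis_R_sc_def)
qed

theorem iso_heis_R_if_bracket_factors:
  fixes br :: "'a \<Rightarrow> 'a \<Rightarrow> 'a"
  assumes br: "\<And>x y. br x y = \<omega> x y *\<^sub>R z" and z0: "z \<noteq> 0" and z_rad: "z \<in> radical UNIV"
    and dim_rad: "dim (radical UNIV) = 2"
  obtains k where "DIM('a) = 2 * k + 2" "iso_to_sc br (2 * k + 2) (heis_R_sc k)"
proof -
  obtain k x y where "\<forall>i<k. x i \<in> UNIV \<and> y i \<in> UNIV" and fam: "symplectic_family k x y"
    and spn: "UNIV \<subseteq> span (x ` {..<k} \<union> y ` {..<k} \<union> radical UNIV)"
    by (rule symplectic_basis_exists[OF subspace_UNIV])
  obtain C where C: "{z} \<subseteq> C" "C \<subseteq> radical UNIV" "independent C" "radical UNIV \<subseteq> span C"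
    using maximal_independent_subset_extend[of "{z}" "radical UNIV"] z_rad z0
    by (auto simp: dependent_single)
  have "card C = 2" using basis_card_eq_dim[OF C(2,4,3)] dim_rad by simp
  then obtain u where Czu: "C = {z, u}" and uz: "u \<noteq> z" using C(1) by (auto simp: card_2_iff)
  have u_rad: "u \<in> radical UNIV" using C(2) Czu by simp
  have u: "u \<notin> span {z}" using C(3) Czu uz by (simp add: independent_insert insert_commute)
  let ?b = "heis_family k x y z u"
  have ind: "inj_on ?b {..<2 * k + 2} \<and> independent (?b ` {..<2 * k + 2})"
    by (rule heis_family_independent[OF fam z_rad u_rad z0 u])
  have spn_b: "span (?b ` {..<2 * k + 2}) = UNIV"
    by (rule heis_family_spans[OF spn]) (use C(4) Czu in simp)
  have "DIM('a) = card (?b ` {..<2 * k + 2})"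
    using dim_eq_card_independent[of "?b ` {..<2 * k + 2}"] ind spn_b dim_span
    by (metis dim_UNIV)
  also have "\<dots> = 2 * k + 2" using ind by (simp add: card_image)
  finally have dim: "DIM('a) = 2 * k + 2" .
  have "br (?b i) (?b j) = (\<Sum>l<2 * k + 2. heis_R_sc k i j l *\<^sub>R ?b l)"
    if "i < 2 * k + 2" "j < 2 * k + 2" for i j
  proof -
    have "(\<Sum>l<2 * k + 2. heis_R_sc k i j l *\<^sub>R ?b l)
        = (\<Sum>l<2 * k + 2. if l = 2 * k then heis_R_sc k i j (2 * k) *\<^sub>R z else 0)"
      by (rule sum.cong) (auto simp: heis_R_sc_def heis_family_simps)
    also have "\<dots> = \<omega> (?b i) (?b j) *\<^sub>R z"
      using heis_family_form[OF fam z_rad u_rad that] by simp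
    finally show ?thesis using br by simp
  qed
  with ind spn_b have "iso_to_sc br (2 * k + 2) (heis_R_sc k)"
    unfolding iso_to_sc_def by blast
  with dim show thesis by (rule that)
qed

end

section \<open>Coadjoint stabilizers\<close>

locale lie_alg =
  fixes br :: "'a::euclidean_space \<Rightarrow> 'a \<Rightarrow> 'a"
  assumes lie: "lie_algebra br"
begin

lemma bilinear_br: "bilinear br" and br_self [simp]: "br x x = 0"
  and jacobi: "br x (br y z) + br y (br z x) + br z (br x y) = 0"
  using lie by (simp_all add: lie_algebra_def)

lemma linear_br_right: "linear (br x)" and linear_br_left: "linear (\<lambda>x. br x y)"
  using bilinear_br by (simp_all add: bilinear_def)

lemma br_add_left [simp]: "br (x + y) z = br x z + br y z"
  and br_add_right [simp]: "br x (y + z) = br x y + br x z"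
  and br_diff_left [simp]: "br (x - y) z = br x z - br y z"
  and br_diff_right [simp]: "br x (y - z) = br x y - br x z"
  and br_scale_left [simp]: "br (c *\<^sub>R x) y = c *\<^sub>R br x y"
  and br_scale_right [simp]: "br x (c *\<^sub>R y) = c *\<^sub>R br x y"
  and br_minus_left [simp]: "br (- x) y = - br x y"
  and br_minus_right [simp]: "br x (- y) = - br x y"
  and br_zero_left [simp]: "br 0 x = 0"
  and br_zero_right [simp]: "br x 0 = 0"
  using bilinear_ladd[OF bilinear_br] bilinear_radd[OF bilinear_br]
    bilinear_lsub[OF bilinear_br] bilinear_rsub[OF bilinear_br]
    bilinear_lmul[OF bilinear_br] bilinear_rmul[OF bilinear_br]
    bilinear_lneg[OF bilinear_br] bilinear_rneg[OF bilinear_br]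
    bilinear_lzero[OF bilinear_br] bilinear_rzero[OF bilinear_br]
  by simp_all

lemma br_antisym: "br x y = - br y x"
proof -
  have "0 = br (x + y) (x + y)" by simp
  also have "\<dots> = br x x + br y x + (br x y + br y y)" by (simp only: br_add_left br_add_right)
  finally show ?thesis by (simp add: eq_neg_iff_add_eq_0 add.commute)
qed

lemma alternating_form_functional:
  assumes "linear F"
  shows "alternating_form (\<lambda>x y. F (br x y))"
  unfolding alternating_form_def bilinear_def
  using assms by (auto intro!: linearI simp: linear_add linear_cmul linear_0)

definition stabilizer :: "('a \<Rightarrow> real) \<Rightarrow> 'a set" where
  "stabilizer F = {x. \<forall>y. F (br x y) = 0}"

lemma stabilizer_eq_radical:
  assumes "linear F"
  shows "stabilizer F = alternating_form.radical (\<lambda>x y. F (br x y)) UNIV"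
  using alternating_form.radical_def[OF alternating_form_functional[OF assms]]
  by (simp add: stabilizer_def)

lemma orbit_dim_plus_dim_stabilizer:
  assumes lF: "linear F"
  shows "orbit_dim br F + dim (stabilizer F) = DIM('a)"
proof -
  define \<phi> where "\<phi> x = (\<Sum>j\<in>Basis. F (br x j) *\<^sub>R j)" for x
  have lphi: "linear \<phi>"
    unfolding \<phi>_def
    by (intro linearI) (simp_all add: linear_add[OF lF] linear_cmul[OF lF] scaleR_add_left
          sum.distrib scaleR_sum_right)
  have "orbit_dim br F = dim (span (\<phi> ` Basis))" unfolding orbit_dim_def \<phi>_def by simp
  also have "span (\<phi> ` Basis) = range \<phi>" using linear_span_image[OF lphi, of Basis] by simp
  finally have orbit: "orbit_dim br F = dim (range \<phi>)" .
  have "\<phi> x = 0 \<longleftrightarrow> x \<in> stabilizer F" for x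
  proof
    assume "\<phi> x = 0"
    have "\<phi> x \<bullet> j = F (br x j)" if "j \<in> Basis" for j
      using that by (simp add: \<phi>_def inner_sum_left inner_Basis if_distrib sum.delta cong: if_cong)
    then have basis: "F (br x j) = 0" if "j \<in> Basis" for j
      using that \<open>\<phi> x = 0\<close> by simp
    have "F (br x y) = 0" for y
    proof -
      have "br x y = (\<Sum>j\<in>Basis. (y \<bullet> j) *\<^sub>R br x j)"
        using linear_sum[OF linear_br_right, of x "\<lambda>j. (y \<bullet> j) *\<^sub>R j" Basis]
        by (simp add: euclidean_representation)
      then show ?thesis using basis by (simp add: linear_sum[OF lF] linear_cmul[OF lF])
    qed
    then show "x \<in> stabilizer F" by (simp add: stabilizer_def)
  qed (simp add: stabilizer_def \<phi>_def)
  then have "{x. \<phi> x = 0} = stabilizer F" by blast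
  then show ?thesis using orbit dim_range_plus_dim_kernel[OF lphi] by simp
qed

end

locale md_algebra = lie_alg br for br :: "'a::euclidean_space \<Rightarrow> 'a \<Rightarrow> 'a" +
  fixes n :: nat
  assumes md: "MD_algebra br (n - 2) n" and n_ge_6: "6 \<le> n"
begin

abbreviation G1 :: "'a set" where "G1 \<equiv> derived_alg br"

lemma DIM_eq: "DIM('a) = n"
  using md by (simp add: MD_algebra_def)

lemma br_in_derived_alg [simp]: "br x y \<in> G1"
  by (auto simp: derived_alg_def intro: span_base)

lemma subspace_derived_alg: "subspace G1"
  by (simp add: derived_alg_def)

lemma dim_stabilizer_eq_2:
  assumes "linear F" "v \<in> G1" "F v \<noteq> 0"
  shows "dim (stabilizer F) = 2"
proof -
  have "orbit_dim br F = n - 2" using md assms by (auto simp: MD_algebra_def)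
  then show ?thesis using orbit_dim_plus_dim_stabilizer[OF assms(1)] DIM_eq n_ge_6 by simp
qed

lemma common_kernel_not_subset_stabilizer:
  fixes p q :: "'a \<Rightarrow> real"
  assumes "linear F" "v \<in> G1" "F v \<noteq> 0" "linear p" "linear q"
  shows "\<not> {y. p y = 0 \<and> q y = 0} \<subseteq> stabilizer F"
proof
  assume "{y. p y = 0 \<and> q y = 0} \<subseteq> stabilizer F"
  then have "dim {y. p y = 0 \<and> q y = 0} \<le> 2"
    using dim_subset dim_stabilizer_eq_2[OF assms(1-3)] by metis
  then show False
    using DIM_le_dim_common_kernel_plus_2[OF assms(4,5)] DIM_eq n_ge_6 by simp
qed

lemma form_not_decomposable:
  fixes F p q :: "'a \<Rightarrow> real"
  assumes "linear F" "v \<in> G1" "F v \<noteq> 0" "linear p" "linear q"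
  shows "\<not> (\<forall>x y. F (br x y) = p x * q y - p y * q x)"
  using common_kernel_not_subset_stabilizer[OF assms] by (auto simp: stabilizer_def)

text \<open>If every \<open>ad x\<close> acts on \<open>G1\<close>, as seen through \<open>g\<close> and \<open>F\<close>, by the scalar \<open>\<nu> x\<close>, the
  Jacobi identity gives \<open>\<nu> \<and> F([\<cdot>,\<cdot>]) = 0\<close>; for \<open>\<nu> x0 = 1\<close> this puts the common kernel of \<open>\<nu>\<close>
  and \<open>F([x0,\<cdot>])\<close> into the stabilizer of \<open>F\<close>.\<close>

lemma scalar_action_coefficient_eq_0:
  fixes F g \<nu> :: "'a \<Rightarrow> real"
  assumes lF: "linear F" and v: "v \<in> G1" "F v \<noteq> 0" and lg: "linear g" and l\<nu>: "linear \<nu>"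
    and action: "\<And>x w. w \<in> G1 \<Longrightarrow> g (br x w) = \<nu> x * F w"
  shows "\<nu> x = 0"
proof (rule ccontr)
  have cyclic: "\<nu> x * F (br y w) + \<nu> y * F (br w x) + \<nu> w * F (br x y) = 0" for x y w
  proof -
    have "g (br x (br y w) + br y (br w x) + br w (br x y)) = 0"
      using jacobi[of x y w] linear_0[OF lg] by simp
    then show ?thesis using action by (simp add: linear_add[OF lg])
  qed
  assume "\<nu> x \<noteq> 0"
  define x0 where "x0 = (1 / \<nu> x) *\<^sub>R x"
  have \<nu>x0: "\<nu> x0 = 1" using \<open>\<nu> x \<noteq> 0\<close> by (simp add: x0_def linear_cmul[OF l\<nu>])
  have "linear (\<lambda>y. F (br x0 y))"
    using linear_compose[OF linear_br_right lF] by (simp add: o_def)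
  moreover have "{y. \<nu> y = 0 \<and> F (br x0 y) = 0} \<subseteq> stabilizer F"
  proof (clarsimp simp: stabilizer_def)
    fix y w assume "\<nu> y = 0" "F (br x0 y) = 0"
    then show "F (br y w) = 0" using cyclic[of x0 y w] \<nu>x0 by simp
  qed
  ultimately show False using common_kernel_not_subset_stabilizer[OF lF v l\<nu>] by blast
qed

section \<open>One-dimensional derived algebra\<close>

lemma derived_alg_dim_1_generator:
  assumes "dim G1 = 1"
  obtains z F where "z \<in> G1" "linear F" "F z = 1" "\<And>v. v \<in> G1 \<Longrightarrow> v = F v *\<^sub>R z"
proof -
  obtain B where B: "B \<subseteq> G1" "independent B" "G1 \<subseteq> span B" "card B = 1"
    using basis_exists[of G1] assms by auto
  obtain z where Bz: "B = {z}" using B(4) by (rule card_1_singletonE)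
  then have z: "z \<in> G1" "z \<noteq> 0" using B(1,2) by auto
  define F where "F v = (v \<bullet> z) / (z \<bullet> z)" for v
  have lF: "linear F" unfolding F_def
    by (intro linearI) (simp_all add: inner_add_left add_divide_distrib)
  have Fz: "F z = 1" using z by (simp add: F_def)
  have "v = F v *\<^sub>R z" if v: "v \<in> G1" for v
  proof -
    obtain c where "v = c *\<^sub>R z" using B(3) Bz v by (auto simp: span_singleton)
    then show ?thesis using Fz by (simp add: linear_cmul[OF lF])
  qed
  with z lF Fz show thesis using that by blast
qed

lemma derived_alg_generator_central:
  assumes z: "z \<in> G1" and lF: "linear F" and Fz: "F z = 1"
    and gen: "\<And>v. v \<in> G1 \<Longrightarrow> v = F v *\<^sub>R z"
  shows "br z x = 0"
proof -
  have "F (br x z) = 0"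
  proof (rule scalar_action_coefficient_eq_0[OF lF z _ lF, where \<nu> = "\<lambda>x. F (br x z)"])
    show "F z \<noteq> 0" using Fz by simp
    show "linear (\<lambda>x. F (br x z))"
      using linear_compose[OF linear_br_left lF] by (simp add: o_def)
    show "F (br x w) = F (br x z) * F w" if "w \<in> G1" for x w
      using arg_cong[OF gen[OF that], of "\<lambda>w. F (br x w)"] by (simp add: linear_cmul[OF lF])
  qed
  then show ?thesis using gen[of "br x z"] br_antisym[of z x] by simp
qed

theorem heis_R_if_dim_derived_alg_1:
  assumes "dim G1 = 1"
  shows "\<exists>m. 2 * m = n - 2 \<and> iso_to_sc br (2 * m + 2) (heis_R_sc m)"
proof -
  obtain z F where z: "z \<in> G1" and lF: "linear F" and Fz: "F z = 1"
    and gen: "\<And>v. v \<in> G1 \<Longrightarrow> v = F v *\<^sub>R z"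
    using derived_alg_dim_1_generator[OF assms] by blast
  interpret \<omega>: alternating_form "\<lambda>x y. F (br x y)" by (rule alternating_form_functional[OF lF])
  have "br x y = F (br x y) *\<^sub>R z" for x y by (rule gen) simp
  moreover have "z \<noteq> 0" using Fz linear_0[OF lF] by auto
  moreover have "z \<in> \<omega>.radical UNIV"
    using derived_alg_generator_central[OF z lF Fz gen] linear_0[OF lF]
    by (simp add: \<omega>.radical_def)
  moreover have "dim (\<omega>.radical UNIV) = 2"
    using dim_stabilizer_eq_2[OF lF z] Fz by (simp add: stabilizer_eq_radical[OF lF])
  ultimately obtain m where "DIM('a) = 2 * m + 2" "iso_to_sc br (2 * m + 2) (heis_R_sc m)"
    by (rule \<omega>.iso_heis_R_if_bracket_factors)
  then show ?thesis using DIM_eq by auto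
qed

end

section \<open>Two-dimensional non-central derived algebra\<close>

context md_algebra
begin

lemma dim_lie_centre_le_2:
  assumes "v \<in> G1" "v \<noteq> 0"
  shows "dim (lie_centre br) \<le> 2"
proof -
  define F where "F w = (w \<bullet> v) / (v \<bullet> v)" for w
  have lF: "linear F" unfolding F_def
    by (intro linearI) (simp_all add: inner_add_left add_divide_distrib)
  have "F v \<noteq> 0" using assms(2) by (simp add: F_def)
  moreover have "lie_centre br \<subseteq> stabilizer F"
    by (auto simp: lie_centre_def stabilizer_def linear_0[OF lF])
  ultimately show ?thesis using dim_subset dim_stabilizer_eq_2[OF lF assms(1)] by metis
qed

end

lemma (in lie_alg) bracket_coefficient_jacobi:
  fixes c \<kappa> :: "'a \<Rightarrow> real"
  assumes a0: "a0 \<noteq> 0" and brc: "\<And>x. br x a0 = c x *\<^sub>R a0"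
    and br\<kappa>: "\<And>x. br x a = \<kappa> x *\<^sub>R a0"
  shows "\<kappa> (br x y) = c x * \<kappa> y - c y * \<kappa> x"
proof -
  have "br x (br y a) + br y (br a x) + br a (br x y) = 0" by (rule jacobi)
  then have "(c x * \<kappa> y - c y * \<kappa> x - \<kappa> (br x y)) *\<^sub>R a0 = 0"
    using br_antisym[of a x] br_antisym[of a "br x y"] by (simp add: br\<kappa> brc algebra_simps)
  then show ?thesis using a0 by simp
qed

locale md_algebra_derived_dim_2 = md_algebra +
  assumes dim_derived_alg: "dim G1 = 2"
    and derived_alg_not_central: "\<not> G1 \<subseteq> lie_centre br"
begin

lemma derived_alg_eq_span_pair:
  assumes u: "u \<in> G1" and v: "v \<in> G1" and u0: "u \<noteq> 0" and vu: "v \<notin> span {u}"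
  shows "G1 = span {u, v}"
proof -
  have sub: "span {u, v} \<subseteq> G1" using u v subspace_derived_alg by (intro span_minimal) auto
  have "u \<noteq> v" using vu span_base[of u "{u}"] by auto
  have ind: "independent {v, u}" using vu u0 by (simp add: independent_insert dependent_single)
  have "dim (span {u, v}) = 2"
    using ind \<open>u \<noteq> v\<close> by (simp add: dim_eq_card_independent insert_commute)
  then show ?thesis
    using subspace_dim_equal[OF subspace_span subspace_derived_alg sub] dim_derived_alg by simp
qed

lemma exists_derived_alg_complement:
  assumes "u \<noteq> 0"
  shows "\<exists>v\<in>G1. v \<notin> span {u}"
proof (rule ccontr)
  assume "\<not> ?thesis"
  then have "dim G1 \<le> card {u}" by (intro dim_le_card) auto
  then show False using dim_derived_alg by simp
qed

lemma exists_derived_alg_nonzero: "\<exists>u\<in>G1. u \<noteq> 0"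
proof (rule ccontr)
  assume "\<not> ?thesis"
  then have "dim G1 \<le> card ({} :: 'a set)" by (intro dim_le_card) auto
  then show False using dim_derived_alg by simp
qed

lemma derived_alg_coordinates:
  assumes u: "u \<in> G1" and v: "v \<in> G1" and u0: "u \<noteq> 0" and vu: "v \<notin> span {u}"
  obtains fu fv :: "'a \<Rightarrow> real"
  where "linear fu" "linear fv" "fu u = 1" "fu v = 0" "fv u = 0" "fv v = 1"
    "\<And>w. w \<in> G1 \<Longrightarrow> w = fu w *\<^sub>R u + fv w *\<^sub>R v"
proof -
  obtain fu fv :: "'a \<Rightarrow> real" where f: "linear fu" "linear fv" "fu u = 1" "fu v = 0"
    "fv u = 0" "fv v = 1" "\<And>w. w \<in> span {u, v} \<Longrightarrow> w = fu w *\<^sub>R u + fv w *\<^sub>R v"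
    by (rule span_pair_dual_basis[OF u0 vu]) blast
  show thesis
    by (rule that[OF f(1-6)]) (use f(7) derived_alg_eq_span_pair[OF assms] in auto)
qed

lemma triangular_action_coefficients:
  fixes c \<mu> :: "'a \<Rightarrow> real"
  assumes a0: "a0 \<in> G1" "a0 \<noteq> 0" and a1: "a1 \<in> G1" "a1 \<notin> span {a0}"
    and lc: "linear c" and l\<mu>: "linear \<mu>"
    and brc: "\<And>x. br x a0 = c x *\<^sub>R a0" and br\<mu>: "\<And>x. br x a1 = \<mu> x *\<^sub>R a0"
  shows "c a1 = 0 \<and> \<mu> a1 = 0 \<and> (\<forall>x y. c x * \<mu> y = c y * \<mu> x)"
proof -
  obtain g f :: "'a \<Rightarrow> real" where lg: "linear g" and lf: "linear f" and g0: "g a0 = 1"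
    and g1: "g a1 = 0" and f0: "f a0 = 0" and f1: "f a1 = 1"
    and crd: "\<And>w. w \<in> G1 \<Longrightarrow> w = g w *\<^sub>R a0 + f w *\<^sub>R a1"
    by (rule derived_alg_coordinates[OF a0(1) a1(1) a0(2) a1(2)]) blast
  have expand: "\<kappa> (br x y) = g (br x y) * \<kappa> a0 + f (br x y) * \<kappa> a1" if "linear \<kappa>" for \<kappa> x y
    using arg_cong[OF crd[OF br_in_derived_alg[of x y]], of \<kappa>]
    by (simp add: linear_add[OF that] linear_cmul[OF that])
  have ca0: "c a0 = 0" using brc[of a0] a0(2) by simp
  have "\<not> (\<forall>x y. f (br x y) = 0 * 0 - 0 * 0)"
    using form_not_decomposable[OF lf a1(1) _ linear_zero linear_zero] f1 by simp
  moreover have "f (br x y) * c a1 = 0" for x y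
    using expand[OF lc, of x y] bracket_coefficient_jacobi[OF a0(2) brc brc, of x y] ca0 by simp
  ultimately have ca1: "c a1 = 0" by auto
  have "\<mu> a0 *\<^sub>R a0 = - (c a1 *\<^sub>R a0)" using br_antisym[of a0 a1] by (simp add: brc br\<mu>)
  then have \<mu>a0: "\<mu> a0 = 0" using ca1 a0(2) by simp
  have \<mu>br: "f (br x y) * \<mu> a1 = c x * \<mu> y - c y * \<mu> x" for x y
    using expand[OF l\<mu>, of x y] bracket_coefficient_jacobi[OF a0(2) brc br\<mu>, of x y] \<mu>a0 by simp
  have \<mu>a1: "\<mu> a1 = 0"
  proof (rule ccontr)
    assume ne: "\<mu> a1 \<noteq> 0"
    have lp: "linear (\<lambda>x. c x / \<mu> a1)"
      by (intro linearI) (simp_all add: linear_add[OF lc] linear_cmul[OF lc] add_divide_distrib)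
    have "\<forall>x y. f (br x y) = c x / \<mu> a1 * \<mu> y - c y / \<mu> a1 * \<mu> x"
      using \<mu>br ne by (simp add: field_simps)
    moreover have "f a1 \<noteq> 0" using f1 by simp
    ultimately show False using form_not_decomposable[OF lf a1(1) _ lp l\<mu>] by blast
  qed
  show ?thesis using ca1 \<mu>a1 \<mu>br by simp
qed

end

context md_algebra_derived_dim_2
begin

lemma triangular_action_impossible:
  fixes c \<mu> :: "'a \<Rightarrow> real"
  assumes a0: "a0 \<in> G1" "a0 \<noteq> 0" and a1: "a1 \<in> G1" "a1 \<notin> span {a0}"
    and lc: "linear c" and l\<mu>: "linear \<mu>"
    and brc: "\<And>x. br x a0 = c x *\<^sub>R a0" and br\<mu>: "\<And>x. br x a1 = \<mu> x *\<^sub>R a0"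
  shows False
proof -
  obtain g f :: "'a \<Rightarrow> real" where lg: "linear g" and lf: "linear f" and g0: "g a0 = 1"
    and f0: "f a0 = 0" and f1: "f a1 = 1"
    and crd: "\<And>w. w \<in> G1 \<Longrightarrow> w = g w *\<^sub>R a0 + f w *\<^sub>R a1"
    by (rule derived_alg_coordinates[OF a0(1) a1(1) a0(2) a1(2)]) blast
  have comm: "c x * \<mu> y = c y * \<mu> x" for x y
    using triangular_action_coefficients[OF assms] by blast
  have act: "br x v = (g v * c x + f v * \<mu> x) *\<^sub>R a0" if "v \<in> G1" for x v
    using arg_cong[OF crd[OF that], of "br x"] by (simp add: brc br\<mu> scaleR_add_left)
  show False
  proof (cases "\<forall>x. c x = 0")
    case True
    have "\<mu> x = 0" for x
    proof (rule scalar_action_coefficient_eq_0[OF lf a1(1) _ lg l\<mu>])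
      show "g (br x v) = \<mu> x * f v" if "v \<in> G1" for x v
        using act[OF that, of x] True g0 by (simp add: linear_cmul[OF lg])
    qed (simp add: f1)
    then have "br v x = 0" if "v \<in> G1" for x v
      using act[OF that, of x] br_antisym[of v x] True by simp
    then show False using derived_alg_not_central by (auto simp: lie_centre_def)
  next
    case False
    then obtain x0 where cx0: "c x0 \<noteq> 0" by blast
    define t where "t = \<mu> x0 / c x0"
    define h where "h v = g v + t * f v" for v
    have lh: "linear h" unfolding h_def
      by (intro linearI) (simp_all add: linear_add[OF lg] linear_cmul[OF lg] linear_add[OF lf]
          linear_cmul[OF lf] algebra_simps)
    have h0: "h a0 = 1" using g0 f0 by (simp add: h_def)
    have "c x0 = 0"
    proof (rule scalar_action_coefficient_eq_0[OF lh a0(1) _ lh lc])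
      show "h (br x v) = c x * h v" if "v \<in> G1" for x v
      proof -
        have "g v * c x + f v * \<mu> x = c x * h v"
          using comm[of x0 x] cx0 by (simp add: h_def t_def field_simps)
        then have "br x v = (c x * h v) *\<^sub>R a0" using act[OF that, of x] by simp
        then show ?thesis using h0 by (simp add: linear_cmul[OF lh])
      qed
    qed (simp add: h0)
    with cx0 show False by simp
  qed
qed

lemma no_invariant_line:
  assumes a0: "a0 \<in> G1" "a0 \<noteq> 0"
  shows "\<exists>x. br x a0 \<notin> span {a0}"
proof (rule ccontr)
  assume "\<not> ?thesis"
  then have inv: "br x a0 \<in> span {a0}" for x by blast
  obtain a1 where a1: "a1 \<in> G1" "a1 \<notin> span {a0}"
    using exists_derived_alg_complement[OF a0(2)] by blast
  obtain g f :: "'a \<Rightarrow> real" where lg: "linear g" and lf: "linear f" and g0: "g a0 = 1"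
    and f0: "f a0 = 0" and f1: "f a1 = 1"
    and crd: "\<And>w. w \<in> G1 \<Longrightarrow> w = g w *\<^sub>R a0 + f w *\<^sub>R a1"
    by (rule derived_alg_coordinates[OF a0(1) a1(1) a0(2) a1(2)]) blast
  have linear_g_br: "linear (\<lambda>x. \<phi> (br x a))" if "linear \<phi>" for \<phi> a
    using linear_compose[OF linear_br_left that] by (simp add: o_def)
  have brc: "br x a0 = g (br x a0) *\<^sub>R a0" for x
  proof -
    obtain t where "br x a0 = t *\<^sub>R a0" using inv[of x] by (auto simp: span_singleton)
    then show ?thesis using g0 by (simp add: linear_cmul[OF lg])
  qed
  have f_br_a0: "f (br x a0) = 0" for x
    using arg_cong[OF brc, of f] f0 by (simp add: linear_cmul[OF lf])
  have "f (br x a1) = 0" for x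
  proof (rule scalar_action_coefficient_eq_0[OF lf a1(1) _ lf linear_g_br[OF lf]])
    show "f (br x v) = f (br x a1) * f v" if "v \<in> G1" for x v
      using arg_cong[OF crd[OF that], of "\<lambda>w. f (br x w)"]
      by (simp add: linear_add[OF lf] linear_cmul[OF lf] f_br_a0)
  qed (simp add: f1)
  then have "br x a1 = g (br x a1) *\<^sub>R a0" for x using crd[of "br x a1"] by simp
  with brc show False
    by (rule triangular_action_impossible[OF a0 a1 linear_g_br[OF lg] linear_g_br[OF lg]])
qed

lemma derived_alg_abelian:
  assumes "v \<in> G1" "w \<in> G1"
  shows "br v w = 0"
proof -
  obtain a where a: "a \<in> G1" "a \<noteq> 0" using exists_derived_alg_nonzero by blast
  obtain b where b: "b \<in> G1" "b \<notin> span {a}" using exists_derived_alg_complement[OF a(2)] by blast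
  obtain fa fb :: "'a \<Rightarrow> real"
    where crd: "\<And>w. w \<in> G1 \<Longrightarrow> w = fa w *\<^sub>R a + fb w *\<^sub>R b"
    by (rule derived_alg_coordinates[OF a(1) b(1) a(2) b(2)]) blast
  have ab: "br a b = 0"
  proof (rule ccontr)
    assume ne: "br a b \<noteq> 0"
    have "br x (br a b) \<in> span {br a b}" for x
    proof -
      have "br x (br a b) = - (br a (br b x) + br b (br x a))"
        using jacobi[of x a b] by (simp only: eq_neg_iff_add_eq_0 add.assoc)
      also have "\<dots> = br (br x a) b + br a (br x b)"
        using br_antisym[of b x] br_antisym[of b "br x a"] by (simp add: algebra_simps)
      also have "br (br x a) b = fa (br x a) *\<^sub>R br a b"
        using arg_cong[OF crd[OF br_in_derived_alg[of x a]], of "\<lambda>u. br u b"] by simp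
      also have "br a (br x b) = fb (br x b) *\<^sub>R br a b"
        using arg_cong[OF crd[OF br_in_derived_alg[of x b]], of "br a"] by simp
      finally show ?thesis by (simp add: span_base span_add span_scale)
    qed
    then show False using no_invariant_line[OF br_in_derived_alg ne] by blast
  qed
  have "br u b = 0" "br u a = 0" if "u \<in> G1" for u
    using arg_cong[OF crd[OF that], of "\<lambda>u. br u b"] arg_cong[OF crd[OF that], of "\<lambda>u. br u a"]
      ab br_antisym[of b a] by simp_all
  then show ?thesis using arg_cong[OF crd[OF assms(2)], of "br v"] assms(1) by simp
qed

lemma ad_commute_on_derived_alg:
  assumes "v \<in> G1"
  shows "br x (br y v) = br y (br x v)"
proof -
  have "br v (br x y) = 0" by (rule derived_alg_abelian[OF assms br_in_derived_alg])
  then show ?thesis using jacobi[of x y v] br_antisym[of v x]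
    by (simp add: eq_neg_iff_add_eq_0)
qed

end

context md_algebra_derived_dim_2
begin

lemma no_real_eigenvector:
  assumes a: "a \<in> G1" and x0a: "br x0 a \<notin> span {a}" and w: "w \<in> G1" "w \<noteq> 0"
  shows "br x0 w \<notin> span {w}"
proof
  assume "br x0 w \<in> span {w}"
  then obtain l where l: "br x0 w = l *\<^sub>R w" by (auto simp: span_singleton)
  have eigen: "v \<in> span {w}" if v: "v \<in> G1" "br x0 v = l *\<^sub>R v" for v
  proof (rule ccontr)
    assume "v \<notin> span {w}"
    then have "a \<in> span {w, v}" using derived_alg_eq_span_pair[OF w(1) v(1) w(2)] a by simp
    then obtain k t where "a - k *\<^sub>R w = t *\<^sub>R v"
      using span_insert[of w "{v}"] span_singleton[of v] by blast
    then have "a = k *\<^sub>R w + t *\<^sub>R v" by (simp add: algebra_simps)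
    then have "br x0 a = l *\<^sub>R a" using l v(2) by (simp add: algebra_simps)
    then show False using x0a by (simp add: span_base span_scale)
  qed
  have "br y w \<in> span {w}" for y
    by (rule eigen) (simp_all add: ad_commute_on_derived_alg[OF w(1), of x0 y] l)
  then show False using no_invariant_line[OF w] by blast
qed

text \<open>Since \<open>G1\<close> is abelian, every \<open>ad x\<close> restricted to \<open>G1\<close> commutes with \<open>ad x0\<close>, which has
  no real eigenvector; so it lies in the span of the identity and \<open>ad x0\<close>.\<close>

lemma derived_action_in_span:
  assumes a: "a \<in> G1" "a \<noteq> 0" and x0a: "br x0 a \<notin> span {a}"
  obtains \<alpha> \<beta> :: "'a \<Rightarrow> real" where "linear \<alpha>" "linear \<beta>" "\<alpha> x0 = 0" "\<beta> x0 = 1"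
    "\<And>x v. v \<in> G1 \<Longrightarrow> br x v = \<alpha> x *\<^sub>R v + \<beta> x *\<^sub>R br x0 v"
proof -
  define b where "b = br x0 a"
  have b: "b \<in> G1" by (simp add: b_def)
  obtain fa fb :: "'a \<Rightarrow> real" where lfa: "linear fa" and lfb: "linear fb"
    and fab: "fa b = 0" and fbb: "fb b = 1"
    and crd: "\<And>w. w \<in> G1 \<Longrightarrow> w = fa w *\<^sub>R a + fb w *\<^sub>R b"
    by (rule derived_alg_coordinates[OF a(1) b a(2) x0a[folded b_def]]) blast
  define \<alpha> where "\<alpha> x = fa (br x a)" for x
  define \<beta> where "\<beta> x = fb (br x a)" for x
  have br_a: "br x a = \<alpha> x *\<^sub>R a + \<beta> x *\<^sub>R b" for x
    unfolding \<alpha>_def \<beta>_def by (rule crd) simp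
  have br_b: "br x b = \<alpha> x *\<^sub>R b + \<beta> x *\<^sub>R br x0 b" for x
    using ad_commute_on_derived_alg[OF a(1), of x x0] br_a[of x] by (simp add: b_def)
  have "br x v = \<alpha> x *\<^sub>R v + \<beta> x *\<^sub>R br x0 v" if v: "v \<in> G1" for x v
  proof -
    have "br x v = fa v *\<^sub>R br x a + fb v *\<^sub>R br x b"
      using arg_cong[OF crd[OF v], of "br x"] by simp
    also have "\<dots> = \<alpha> x *\<^sub>R (fa v *\<^sub>R a + fb v *\<^sub>R b) + \<beta> x *\<^sub>R (fa v *\<^sub>R b + fb v *\<^sub>R br x0 b)"
      by (simp add: br_a[of x] br_b[of x] algebra_simps)
    also have "fa v *\<^sub>R b + fb v *\<^sub>R br x0 b = br x0 v"
      using arg_cong[OF crd[OF v], of "br x0"] by (simp add: b_def)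
    finally show ?thesis using crd[OF v, symmetric] by simp
  qed
  moreover have "linear \<alpha>" "linear \<beta>"
    unfolding \<alpha>_def \<beta>_def using linear_compose[OF linear_br_left lfa]
      linear_compose[OF linear_br_left lfb] by (simp_all add: o_def)
  moreover have "\<alpha> x0 = 0" "\<beta> x0 = 1" by (simp_all add: \<alpha>_def \<beta>_def b_def[symmetric] fab fbb)
  ultimately show thesis using that by blast
qed

lemma exists_identity_action:
  assumes a: "a \<in> G1" "a \<noteq> 0" and x0a: "br x0 a \<notin> span {a}"
  obtains x1 where "\<And>v. v \<in> G1 \<Longrightarrow> br x1 v = v"
proof -
  obtain \<alpha> \<beta> :: "'a \<Rightarrow> real" where l\<alpha>: "linear \<alpha>" and l\<beta>: "linear \<beta>" and \<alpha>0: "\<alpha> x0 = 0"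
    and \<beta>0: "\<beta> x0 = 1" and rep: "\<And>x v. v \<in> G1 \<Longrightarrow> br x v = \<alpha> x *\<^sub>R v + \<beta> x *\<^sub>R br x0 v"
    by (rule derived_action_in_span[OF assms]) blast
  obtain xa where xa: "\<alpha> xa \<noteq> 0"
  proof (rule ccontr)
    assume "\<not> thesis"
    then have \<alpha>_zero: "\<alpha> x = 0" for x using that by blast
    define b where "b = br x0 a"
    have b: "b \<in> G1" "b \<noteq> 0" "br x0 b \<notin> span {b}"
      using no_real_eigenvector[OF a(1) x0a] not_in_span_singleton_swap[OF a(2) x0a]
      by (simp_all add: b_def)
    obtain h :: "'a \<Rightarrow> real" where lh: "linear h" "h (br x0 b) = 0" "h b = 1"
      using linear_functional_separating[of "br x0 b" b]
        not_in_span_singleton_swap[OF b(2) b(3)] by blast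
    have "\<beta> x0 = 0"
    proof (rule scalar_action_coefficient_eq_0[OF _ a(1) _ lh(1) l\<beta>])
      show "linear (\<lambda>v. h (br x0 v))"
        using linear_compose[OF linear_br_right lh(1)] by (simp add: o_def)
      show "h (br x0 a) \<noteq> 0" using lh(3) by (simp add: b_def)
      show "h (br x v) = \<beta> x * h (br x0 v)" if "v \<in> G1" for x v
        using rep[OF that, of x] \<alpha>_zero by (simp add: linear_cmul[OF lh(1)])
    qed
    then show False using \<beta>0 by simp
  qed
  define x1 where "x1 = (1 / \<alpha> xa) *\<^sub>R (xa - \<beta> xa *\<^sub>R x0)"
  have "br x1 v = v" if "v \<in> G1" for v
    using rep[OF that, of xa] rep[OF that, of x0] xa \<alpha>0 \<beta>0 by (simp add: x1_def)
  then show thesis by (rule that)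
qed

lemma ad_discriminant_negative:
  assumes a: "a \<in> G1" and x0a: "br x0 a \<notin> span {a}"
    and x0b: "br x0 (br x0 a) = u *\<^sub>R a + w *\<^sub>R br x0 a"
  shows "w\<^sup>2 + 4 * u < 0"
proof (rule ccontr)
  assume "\<not> w\<^sup>2 + 4 * u < 0"
  then have s2: "sqrt (w\<^sup>2 + 4 * u) * sqrt (w\<^sup>2 + 4 * u) = w\<^sup>2 + 4 * u" by simp
  define l where "l = (w + sqrt (w\<^sup>2 + 4 * u)) / 2"
  define l' where "l' = (w - sqrt (w\<^sup>2 + 4 * u)) / 2"
  have ll: "l * l' = - u" and lw: "w - l' = l"
    using s2 by (simp_all add: l_def l'_def field_simps power2_eq_square)
  define e where "e = br x0 a - l' *\<^sub>R a"
  have "e \<in> G1" using a subspace_derived_alg by (simp add: e_def subspace_diff subspace_scale)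
  moreover have "e \<noteq> 0" using x0a by (auto simp: e_def span_base span_scale)
  moreover have "br x0 e \<in> span {e}"
  proof -
    have "br x0 e = u *\<^sub>R a + (w - l') *\<^sub>R br x0 a" by (simp add: e_def x0b algebra_simps)
    also have "\<dots> = l *\<^sub>R e" using ll lw by (simp add: e_def algebra_simps)
    finally show ?thesis by (simp add: span_base span_scale)
  qed
  ultimately show False using no_real_eigenvector[OF a x0a] by blast
qed

end

context md_algebra_derived_dim_2
begin

lemma exists_element_commuting_with_identity_action:
  assumes x1: "\<And>v. v \<in> G1 \<Longrightarrow> br x1 v = v"
  obtains x2 where "br x1 x2 = 0" "\<And>v. v \<in> G1 \<Longrightarrow> br x2 v = s *\<^sub>R br x0 v + t *\<^sub>R v"
proof -
  define x2 where "x2 = s *\<^sub>R x0 + t *\<^sub>R x1"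
  have "br x1 (x2 - br x1 x2) = 0" using x1[OF br_in_derived_alg[of x1 x2]] by simp
  moreover have "br (x2 - br x1 x2) v = s *\<^sub>R br x0 v + t *\<^sub>R v" if "v \<in> G1" for v
    using x1[OF that] derived_alg_abelian[OF br_in_derived_alg that, of x1 x2] by (simp add: x2_def)
  ultimately show thesis by (rule that)
qed

lemma complex_structure:
  assumes a: "a \<in> G1" "a \<noteq> 0" and x0a: "br x0 a \<notin> span {a}"
    and x1: "\<And>v. v \<in> G1 \<Longrightarrow> br x1 v = v"
  obtains x2 p q where "br x1 x2 = 0" "br x2 (br x2 a) = - a" "br x2 a \<notin> span {a}"
    "\<And>v. v \<in> G1 \<Longrightarrow> br x0 v = p *\<^sub>R v + q *\<^sub>R br x2 v"
proof -
  define b where "b = br x0 a"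
  have b: "b \<in> G1" by (simp add: b_def)
  obtain fa fb :: "'a \<Rightarrow> real" where crd: "\<And>w. w \<in> G1 \<Longrightarrow> w = fa w *\<^sub>R a + fb w *\<^sub>R b"
    by (rule derived_alg_coordinates[OF a(1) b a(2) x0a[folded b_def]]) blast
  define u where "u = fa (br x0 b)"
  define w where "w = fb (br x0 b)"
  have x0b: "br x0 b = u *\<^sub>R a + w *\<^sub>R b" unfolding u_def w_def by (rule crd) simp
  have "w\<^sup>2 + 4 * u < 0" using ad_discriminant_negative[OF a(1) x0a] x0b by (simp add: b_def)
  moreover define \<sigma> where "\<sigma> = sqrt (- u - w\<^sup>2 / 4)"
  ultimately have \<sigma>: "\<sigma> > 0" "\<sigma> * \<sigma> = - u - w\<^sup>2 / 4" by simp_all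
  obtain x2 where x12: "br x1 x2 = 0"
    and x2v: "\<And>v. v \<in> G1 \<Longrightarrow> br x2 v = (1 / \<sigma>) *\<^sub>R br x0 v + (- w / (2 * \<sigma>)) *\<^sub>R v"
    by (rule exists_element_commuting_with_identity_action[OF x1]) (assumption, blast)
  have x2: "br x2 v = (1 / \<sigma>) *\<^sub>R (br x0 v - (w / 2) *\<^sub>R v)" if "v \<in> G1" for v
    using x2v[OF that] by (simp add: algebra_simps)
  have x2a: "br x2 a = (1 / \<sigma>) *\<^sub>R (b - (w / 2) *\<^sub>R a)" using x2[OF a(1)] by (simp add: b_def)
  note x12
  moreover have "br x0 v = (w / 2) *\<^sub>R v + \<sigma> *\<^sub>R br x2 v" if "v \<in> G1" for v
    using x2[OF that] \<sigma>(1) by simp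
  moreover have "br x2 a \<notin> span {a}"
  proof
    assume "br x2 a \<in> span {a}"
    then have "\<sigma> *\<^sub>R br x2 a + (w / 2) *\<^sub>R a \<in> span {a}"
      by (intro span_add span_scale) (auto intro: span_base)
    then show False using x2a \<sigma>(1) x0a by (simp add: b_def)
  qed
  moreover have "br x2 (br x2 a) = - a"
  proof -
    have "br x2 (br x2 a) = (1 / \<sigma>) *\<^sub>R (br x2 b - (w / 2) *\<^sub>R br x2 a)"
      by (simp add: x2a)
    also have "\<dots> = (1 / (\<sigma> * \<sigma>) * (u + w\<^sup>2 / 4)) *\<^sub>R a"
      by (simp add: x2[OF b] x2a x0b algebra_simps power2_eq_square)
        (simp add: scaleR_add_left[symmetric])
    also have "1 / (\<sigma> * \<sigma>) * (u + w\<^sup>2 / 4) = -1" using \<sigma> by (simp add: field_simps)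
    finally show ?thesis by simp
  qed
  ultimately show thesis using that by blast
qed

lemma complex_frame_exists:
  obtains x1 x2 y1 y2 where "y1 \<in> G1" "y2 \<in> G1" "y1 \<noteq> 0" "y2 \<notin> span {y1}"
    "\<And>v. v \<in> G1 \<Longrightarrow> br x1 v = v" "br x2 y1 = - y2" "br x2 y2 = y1" "br x1 x2 = 0"
    "\<And>z. \<exists>p q. \<forall>v\<in>G1. br z v = br (p *\<^sub>R x1 + q *\<^sub>R x2) v"
proof -
  obtain a where a: "a \<in> G1" "a \<noteq> 0" using exists_derived_alg_nonzero by blast
  obtain x0 where x0a: "br x0 a \<notin> span {a}" using no_invariant_line[OF a] by blast
  obtain \<alpha> \<beta> :: "'a \<Rightarrow> real"
    where rep: "\<And>x v. v \<in> G1 \<Longrightarrow> br x v = \<alpha> x *\<^sub>R v + \<beta> x *\<^sub>R br x0 v"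
    by (rule derived_action_in_span[OF a x0a]) blast
  obtain x1 where x1: "\<And>v. v \<in> G1 \<Longrightarrow> br x1 v = v"
    by (rule exists_identity_action[OF a x0a]) blast
  obtain x2 p q where x12: "br x1 x2 = 0" and x2x2a: "br x2 (br x2 a) = - a"
    and x2a: "br x2 a \<notin> span {a}" and x0v: "\<And>v. v \<in> G1 \<Longrightarrow> br x0 v = p *\<^sub>R v + q *\<^sub>R br x2 v"
    by (rule complex_structure[OF a x0a x1]) (assumption, blast)
  show thesis
  proof (rule that[of a "- br x2 a" x1 x2])
    show "- br x2 a \<notin> span {a}" using x2a span_neg by fastforce
    show "\<exists>p q. \<forall>v\<in>G1. br z v = br (p *\<^sub>R x1 + q *\<^sub>R x2) v" for z
    proof (intro exI ballI)
      fix v assume v: "v \<in> G1"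
      show "br z v = br ((\<alpha> z + \<beta> z * p) *\<^sub>R x1 + (\<beta> z * q) *\<^sub>R x2) v"
        using rep[OF v, of z] x0v[OF v] x1[OF v] by (simp add: algebra_simps)
    qed
  qed (use a x1 x12 x2x2a subspace_derived_alg in \<open>simp_all add: subspace_neg\<close>)
qed

end

lemma sum_lessThan_6:
  "(\<Sum>l<6::nat. f l) = f 0 + f 1 + f 2 + f 3 + f 4 + (f 5 :: 'a::comm_monoid_add)"
  by (simp add: numeral_eq_Suc add.assoc)

lemma (in lie_alg) affC_R2_sc_brackets:
  assumes x1: "br x1 y1 = y1" "br x1 y2 = y2" and x2: "br x2 y1 = - y2" "br x2 y2 = y1"
    and x12: "br x1 x2 = 0" and y12: "br y1 y2 = 0"
    and e: "e4 \<in> lie_centre br" "e5 \<in> lie_centre br" and ij: "i < 6" "j < 6"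
  shows "br ([x1, x2, y1, y2, e4, e5] ! i) ([x1, x2, y1, y2, e4, e5] ! j)
    = (\<Sum>l<6. affC_R2_sc i j l *\<^sub>R [x1, x2, y1, y2, e4, e5] ! l)"
proof -
  have e0: "br e4 v = 0" "br v e4 = 0" "br e5 v = 0" "br v e5 = 0" for v
    using e br_antisym[of v e4] br_antisym[of v e5] by (simp_all add: lie_centre_def)
  have rev: "br y1 x1 = - y1" "br y2 x1 = - y2" "br y1 x2 = y2" "br y2 x2 = - y1"
    "br x2 x1 = 0" "br y2 y1 = 0"
    using x1 x2 x12 y12 br_antisym[of y1 x1] br_antisym[of y2 x1] br_antisym[of y1 x2]
      br_antisym[of y2 x2] br_antisym[of x2 x1] br_antisym[of y2 y1] by simp_all
  have "i = 0 \<or> i = 1 \<or> i = 2 \<or> i = 3 \<or> i = 4 \<or> i = 5"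
    "j = 0 \<or> j = 1 \<or> j = 2 \<or> j = 3 \<or> j = 4 \<or> j = 5" using ij by linarith+
  then show ?thesis
    by (elim disjE) (simp_all add: sum_lessThan_6 affC_R2_sc_def x1 x2 x12 y12 e0 rev)
qed

context md_algebra_derived_dim_2
begin

lemma complex_frame_decomposition:
  assumes x1: "\<And>v. v \<in> G1 \<Longrightarrow> br x1 v = v" and x12: "br x1 x2 = 0"
    and act: "\<exists>p q. \<forall>v\<in>G1. br z v = br (p *\<^sub>R x1 + q *\<^sub>R x2) v"
  obtains p q a d where "a \<in> G1" "br x1 d = 0" "br x2 d = 0" "\<forall>v\<in>G1. br d v = 0"
    "z = p *\<^sub>R x1 + q *\<^sub>R x2 + a + d"
proof -
  obtain p q where pq: "\<forall>v\<in>G1. br z v = br (p *\<^sub>R x1 + q *\<^sub>R x2) v" using act by blast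
  define a where "a = br x1 (z - p *\<^sub>R x1 - q *\<^sub>R x2)"
  define d where "d = z - p *\<^sub>R x1 - q *\<^sub>R x2 - a"
  have a: "a \<in> G1" unfolding a_def by (rule br_in_derived_alg)
  have dG1: "\<forall>v\<in>G1. br d v = 0"
    using pq derived_alg_abelian[OF a] by (simp add: d_def algebra_simps)
  have x1d: "br x1 d = 0" using x1[OF a] by (simp add: d_def a_def)
  have "br x1 (br x2 d) = 0"
    using jacobi[of x1 x2 d] br_antisym[of d x1] x1d x12 by simp
  then have "br x2 d = 0" using x1[OF br_in_derived_alg] by simp
  moreover have "z = p *\<^sub>R x1 + q *\<^sub>R x2 + a + d" by (simp add: d_def)
  ultimately show thesis using that a x1d dG1 by blast
qed

lemma complex_frame_centralizer_central:
  assumes x1: "\<And>v. v \<in> G1 \<Longrightarrow> br x1 v = v" and x12: "br x1 x2 = 0"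
    and act: "\<And>z. \<exists>p q. \<forall>v\<in>G1. br z v = br (p *\<^sub>R x1 + q *\<^sub>R x2) v"
    and d: "br x1 d = 0" "br x2 d = 0" "\<forall>v\<in>G1. br d v = 0"
  shows "d \<in> lie_centre br"
proof -
  have "br d y = 0" for y
  proof -
    obtain p q a d' where a: "a \<in> G1" and d': "br x1 d' = 0"
      and y: "y = p *\<^sub>R x1 + q *\<^sub>R x2 + a + d'"
      by (rule complex_frame_decomposition[OF x1 x12 act]) blast
    have "br x1 (br d d') = 0"
      using jacobi[of x1 d d'] br_antisym[of d' x1] d' d(1) by simp
    then have "br d d' = 0" using x1[OF br_in_derived_alg] by simp
    then show ?thesis
      using y a d br_antisym[of d x1] br_antisym[of d x2] by simp
  qed
  then show ?thesis by (simp add: lie_centre_def)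
qed

lemma complex_frame_spans:
  assumes y: "y1 \<in> G1" "y2 \<in> G1" "y1 \<noteq> 0" "y2 \<notin> span {y1}"
    and x1: "\<And>v. v \<in> G1 \<Longrightarrow> br x1 v = v" and x12: "br x1 x2 = 0"
    and act: "\<And>z. \<exists>p q. \<forall>v\<in>G1. br z v = br (p *\<^sub>R x1 + q *\<^sub>R x2) v"
  shows "UNIV \<subseteq> span ({x1, x2, y1, y2} \<union> lie_centre br)"
proof
  fix z :: 'a
  obtain p q a d where a: "a \<in> G1" and d: "br x1 d = 0" "br x2 d = 0" "\<forall>v\<in>G1. br d v = 0"
    and z: "z = p *\<^sub>R x1 + q *\<^sub>R x2 + a + d"
    by (rule complex_frame_decomposition[OF x1 x12 act]) blast
  have "a \<in> span {y1, y2}" using a derived_alg_eq_span_pair[OF y] by simp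
  then have "a \<in> span ({x1, x2, y1, y2} \<union> lie_centre br)"
    by (rule span_mono[THEN subsetD, rotated]) auto
  moreover have "d \<in> span ({x1, x2, y1, y2} \<union> lie_centre br)"
    using complex_frame_centralizer_central[OF x1 x12 act d] by (simp add: span_base)
  ultimately show "z \<in> span ({x1, x2, y1, y2} \<union> lie_centre br)"
    unfolding z by (intro span_add span_scale) (auto intro: span_base)
qed

theorem affC_R2_if_dim_derived_alg_2: "iso_to_sc br 6 affC_R2_sc"
proof -
  obtain x1 x2 y1 y2 where y: "y1 \<in> G1" "y2 \<in> G1" "y1 \<noteq> 0" "y2 \<notin> span {y1}"
    and x1: "\<And>v. v \<in> G1 \<Longrightarrow> br x1 v = v" and x2y1: "br x2 y1 = - y2"
    and x2y2: "br x2 y2 = y1" and x12: "br x1 x2 = 0"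
    and act: "\<And>z. \<exists>p q. \<forall>v\<in>G1. br z v = br (p *\<^sub>R x1 + q *\<^sub>R x2) v"
    by (rule complex_frame_exists) blast
  obtain Z where Z: "Z \<subseteq> lie_centre br" "independent Z" "lie_centre br \<subseteq> span Z"
    "card Z = dim (lie_centre br)"
    using basis_exists by blast
  let ?S = "{x1, x2, y1, y2}"
  have "?S \<union> lie_centre br \<subseteq> span (?S \<union> Z)"
    using Z(3) span_mono[of Z "?S \<union> Z"] span_superset[of "?S \<union> Z"] by blast
  then have "span (?S \<union> lie_centre br) \<subseteq> span (?S \<union> Z)" by (rule span_minimal) simp
  then have spans: "UNIV \<subseteq> span (?S \<union> Z)" using complex_frame_spans[OF y x1 x12 act] by blast
  moreover have "finite Z" using Z(2) by (simp add: independent_imp_finite)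
  ultimately have "n \<le> card (?S \<union> Z)" using dim_le_card[of UNIV "?S \<union> Z"] DIM_eq by simp
  also have "\<dots> \<le> card ?S + card Z" by (rule card_Un_le)
  also have "card ?S \<le> 4" using card_length[of "[x1, x2, y1, y2]"] by simp
  finally have "card Z = 2" "n = 6"
    using n_ge_6 Z(4) dim_lie_centre_le_2[OF y(1,3)] by simp_all
  then obtain e4 e5 where Ze: "Z = {e4, e5}" by (auto simp: card_2_iff)
  define b where "b = (!) [x1, x2, y1, y2, e4, e5]"
  have "{..<6::nat} = {0, 1, 2, 3, 4, 5}" by auto
  then have img: "b ` {..<6} = ?S \<union> Z" by (auto simp: b_def Ze)
  then have span_b: "span (b ` {..<6}) = UNIV" using spans by auto
  have ind: "inj_on b {..<6} \<and> independent (b ` {..<6})"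
    by (rule inj_on_independent_if_spanning) (use span_b DIM_eq \<open>n = 6\<close> in auto)
  have "br (b i) (b j) = (\<Sum>l<6. affC_R2_sc i j l *\<^sub>R b l)" if "i < 6" "j < 6" for i j
    unfolding b_def
  proof (rule affC_R2_sc_brackets)
    show "br x1 y1 = y1" "br x1 y2 = y2" using x1 y by simp_all
    show "br y1 y2 = 0" using derived_alg_abelian y by simp
    show "e4 \<in> lie_centre br" "e5 \<in> lie_centre br" using Z(1) Ze by auto
  qed (use x2y1 x2y2 x12 that in simp_all)
  with ind span_b show ?thesis unfolding iso_to_sc_def by blast
qed

end

theorem corollary4p2:
  fixes br :: "'a::euclidean_space \<Rightarrow> 'a \<Rightarrow> 'a" and n :: nat
  assumes "MD_algebra br (n - 2) n" and "n \<ge> 6"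
  shows "(dim (derived_alg br) = 1 \<longrightarrow>
            (\<exists>m. 2 * m = n - 2 \<and> iso_to_sc br (2 * m + 2) (heis_R_sc m)))
       \<and> (dim (derived_alg br) = 2 \<and> \<not> derived_alg br \<subseteq> lie_centre br \<longrightarrow>
            iso_to_sc br 6 affC_R2_sc)"
proof -
  have "lie_algebra br" using assms(1) by (simp add: MD_algebra_def solvable_lie_def)
  then interpret md_algebra br n
    by (intro md_algebra.intro lie_alg.intro md_algebra_axioms.intro assms)
  have "iso_to_sc br 6 affC_R2_sc" if "dim (derived_alg br) = 2" "\<not> derived_alg br \<subseteq> lie_centre br"
  proof -
    interpret md_algebra_derived_dim_2 br n by unfold_locales (use that in auto)
    show ?thesis by (rule affC_R2_if_dim_derived_alg_2)
  qed
  then show ?thesis using heis_R_if_dim_derived_alg_1 by blast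
qed

end
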